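(* Let $A\in\mathscr R$ be fixed and let $V_1,V_2$ be distributions supported in $[0,\infty)^d$. Suppose $V_1\in\mathcal S_A$ and $V_2(xA)=o[V_1(xA)]$. Then $V_1*V_2(xA)\sim V_1(xA)$ as $x\to\infty$, and $V_1*V_2\in\mathcal S_A$.
   Context: $\mathscr R$: open, increasing ($\mathbf z\in A,\mathbf y\in[0,\infty)^d\Rightarrow\mathbf z+\mathbf y\in A$) sets $A\subsetneq\mathbb R^d$ with convex complement and $\mathbf 0\notin\overline A$. For $V$ on $[0,\infty)^d$, $\mathbf Z\sim V$: $V(xA)=\mathbf P(\mathbf Z\in xA)$, $V_A$ the distribution of $\sup\{u:\mathbf Z\in uA\}$; $V\in\mathcal S_A$ iff $V_A$ is subexponential ($\overline{V_A^{n*}}(x)\sim n\overline{V_A}(x)$, $n\ge2$). $V_1*V_2$ is the distribution of $\mathbf Z^{(1)}+\mathbf Z^{(2)}$ for independent $\mathbf Z^{(i)}\sim V_i$, and $V_1*V_2\in\mathcal S_A$ means $(V_1*V_2)_A$ is subexponential. *)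

theory Defs
  imports "HOL-Probability.Probability" "HOL-Library.Landau_Symbols"
begin

definition orthant :: "(real ^ 'd) set" where
  "orthant = {z. \<forall>i. 0 \<le> z $ i}"

definition increasing_set :: "(real ^ 'd) set \<Rightarrow> bool" where
  "increasing_set A \<longleftrightarrow> (\<forall>z\<in>A. \<forall>y\<in>orthant. z + y \<in> A)"

definition class_R :: "(real ^ 'd) set \<Rightarrow> bool" where
  "class_R A \<longleftrightarrow> open A \<and> increasing_set A \<and> A \<noteq> UNIV \<and> convex (- A) \<and> 0 \<notin> closure A"

definition distr_orthant :: "(real ^ 'd) measure \<Rightarrow> bool" where
  "distr_orthant V \<longleftrightarrow> prob_space V \<and> sets V = sets borel \<and> emeasure V (- orthant) = 0"

definition conv :: "('a::euclidean_space) measure \<Rightarrow> 'a measure \<Rightarrow> 'a measure" where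
  "conv M N = distr (M \<Otimes>\<^sub>M N) borel (\<lambda>(x, y). x + y)"

fun conv_pow :: "('a::euclidean_space) measure \<Rightarrow> nat \<Rightarrow> 'a measure" where
  "conv_pow F 0 = return borel 0"
| "conv_pow F (Suc n) = conv F (conv_pow F n)"

definition radial_sup :: "(real ^ 'd) set \<Rightarrow> real ^ 'd \<Rightarrow> real" where
  "radial_sup A z = (if {u. 0 < u \<and> z \<in> (\<lambda>a. u *\<^sub>R a) ` A} = {} then 0
                     else Sup {u. 0 < u \<and> z \<in> (\<lambda>a. u *\<^sub>R a) ` A})"

definition V_A :: "(real ^ 'd) set \<Rightarrow> (real ^ 'd) measure \<Rightarrow> real measure" where
  "V_A A V = distr V borel (radial_sup A)"

definition tail :: "real measure \<Rightarrow> real \<Rightarrow> real" where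
  "tail F x = measure F {x<..}"

definition subexponential :: "real measure \<Rightarrow> bool" where
  "subexponential F \<longleftrightarrow> prob_space F \<and> sets F = sets borel \<and> emeasure F {..<0} = 0 \<and>
     (\<forall>x. tail F x > 0) \<and>
     (\<forall>n\<ge>2. (\<lambda>x. tail (conv_pow F n) x) \<sim>[at_top] (\<lambda>x. real n * tail F x))"

definition S_A :: "(real ^ 'd) set \<Rightarrow> (real ^ 'd) measure \<Rightarrow> bool" where
  "S_A A V \<longleftrightarrow> subexponential (V_A A V)"

end

theory Submission
  imports Defs
begin

text \<open>
  Write \<open>F\<close>, \<open>G\<close> and \<open>W\<close> for the laws of the radial functional
  \<open>sup {u. Z \<in> uA}\<close> under \<open>V\<^sub>1\<close>, \<open>V\<^sub>2\<close> and \<open>V\<^sub>1 * V\<^sub>2\<close>, so that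
  \<open>V(xA)\<close> is the tail of the corresponding law at \<open>x > 0\<close>. Since the complement of
  \<open>A\<close> is convex the radial functional is subadditive, and since \<open>A\<close> is increasing it
  grows along the orthant; hence \<open>tail F \<le> tail W \<le> tail (F * G)\<close>.

  The one-dimensional closure property of a subexponential \<open>F\<close> -- if
  \<open>tail G / tail F \<rightarrow> c\<^sub>1\<close> and \<open>tail H / tail F \<rightarrow> c\<^sub>2\<close> then
  \<open>tail (G * H) / tail F \<rightarrow> c\<^sub>1 + c\<^sub>2\<close> -- gives \<open>tail (F * G) \<sim> tail F\<close>, hence
  \<open>tail W \<sim> tail F\<close>, and applied to the convolution powers of \<open>W\<close> it shows that
  \<open>W\<close> is subexponential. The closure property needs only the case \<open>n = 2\<close>: the
  tail of \<open>G * H\<close> is bounded below by three disjoint events, and above after splitting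
  off the event that both summands lie in \<open>(v, x - v]\<close>, whose mass is negligible by
  subexponentiality; long-tailedness of \<open>F\<close> absorbs the shift by \<open>v\<close>.
\<close>

section \<open>Distributions on the half line\<close>

definition distr_nonneg :: "real measure \<Rightarrow> bool" where
  "distr_nonneg F \<longleftrightarrow> prob_space F \<and> sets F = sets borel \<and> emeasure F {..<0} = 0"

lemma distr_nonneg_real_distribution: "distr_nonneg F \<Longrightarrow> real_distribution F"
  by (simp add: distr_nonneg_def real_distribution_def real_distribution_axioms_def)

context real_distribution
begin

lemma tail_eq_1_minus_cdf: "tail M x = 1 - cdf M x"
proof -
  have "{x<..} = space M - {..x}" by auto
  then show ?thesis using prob_compl[of "{..x}"] by (simp add: tail_def cdf_def2)
qed

lemma tail_antimono: "x \<le> y \<Longrightarrow> tail M y \<le> tail M x"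
  using cdf_nondecreasing by (simp add: tail_eq_1_minus_cdf)

lemma tail_tendsto_0: "(tail M \<longlongrightarrow> 0) at_top"
  using tendsto_diff[OF tendsto_const cdf_lim_at_top_prob, of 1]
  by (simp add: tail_eq_1_minus_cdf[abs_def])

lemma measure_Ioc_eq_tail_diff: "a \<le> b \<Longrightarrow> measure M {a<..b} = tail M a - tail M b"
  using cdf_diff_eq[of a b] by (cases "a = b") (auto simp: tail_eq_1_minus_cdf)

end

lemma measure_atLeast_0:
  assumes "distr_nonneg F"
  shows "measure F {0..} = 1"
proof -
  interpret real_distribution F using assms by (rule distr_nonneg_real_distribution)
  have "measure F {..<0} = 0" using assms by (simp add: distr_nonneg_def measure_def)
  moreover have "{0..} = space F - {..<0::real}" by auto
  ultimately show ?thesis using prob_compl[of "{..<0}"] by simp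
qed

lemma measure_atLeastAtMost_0:
  assumes "distr_nonneg F" "0 \<le> v"
  shows "measure F {0..v} = 1 - tail F v"
proof -
  interpret real_distribution F using assms by (intro distr_nonneg_real_distribution)
  have "{0..v} = {0..} - {v<..}" using assms(2) by auto
  moreover have "{v<..} \<subseteq> {0..}" using assms(2) by auto
  ultimately show ?thesis
    using measure_atLeast_0[OF assms(1)] by (simp add: finite_measure_Diff tail_def)
qed

lemma measurable_add_pair:
  fixes M N :: "'a::euclidean_space measure"
  assumes [measurable_cong]: "sets M = sets borel" "sets N = sets borel"
  shows "(\<lambda>(x, y). x + y) \<in> measurable (M \<Otimes>\<^sub>M N) borel"
  by measurable

lemma sets_pair_borel_Collect:
  fixes M :: "'a::topological_space measure" and N :: "'b::topological_space measure"
  assumes "sets M = sets borel" "sets N = sets borel" "Measurable.pred (borel \<Otimes>\<^sub>M borel) P"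
  shows "{p. P p} \<in> sets (M \<Otimes>\<^sub>M N)"
  using assms by (simp add: pred_def space_pair_measure cong: sets_pair_measure_cong)

lemma measure_pair_Times:
  assumes "prob_space M" "prob_space N" "A \<in> sets M" "B \<in> sets N"
  shows "measure (M \<Otimes>\<^sub>M N) (A \<times> B) = measure M A * measure N B"
proof -
  interpret N: prob_space N by fact
  show ?thesis
    using N.emeasure_pair_measure_Times[of A M B] assms by (simp add: measure_def enn2real_mult)
qed

lemma prob_space_conv:
  fixes M N :: "'a::euclidean_space measure"
  assumes "prob_space M" "prob_space N" "sets M = sets borel" "sets N = sets borel"
  shows "prob_space (conv M N)"
  unfolding conv_def
  by (rule prob_space.prob_space_distr[OF prob_space_pair measurable_add_pair]) (use assms in auto)

lemma measure_conv:
  fixes M N :: "'a::euclidean_space measure"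
  assumes "sets M = sets borel" "sets N = sets borel" "B \<in> sets borel"
  shows "measure (conv M N) B = measure (M \<Otimes>\<^sub>M N) {p. fst p + snd p \<in> B}"
proof -
  have "space (M \<Otimes>\<^sub>M N) = UNIV"
    using sets_eq_imp_space_eq[OF assms(1)] sets_eq_imp_space_eq[OF assms(2)]
    by (simp add: space_pair_measure)
  then show ?thesis
    unfolding conv_def using assms
    by (subst measure_distr[OF measurable_add_pair]) (auto intro!: arg_cong[where f="measure _"])
qed

lemma tail_conv:
  assumes "sets G = sets borel" "sets H = sets borel"
  shows "tail (conv G H) x = measure (G \<Otimes>\<^sub>M H) {p. x < fst p + snd p}"
  using measure_conv[OF assms, of "{x<..}"] by (simp add: tail_def)

lemma distr_nonneg_conv:
  assumes G: "distr_nonneg G" and H: "distr_nonneg H"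
  shows "distr_nonneg (conv G H)"
proof -
  have sets: "sets G = sets borel" "sets H = sets borel"
    and prob: "prob_space G" "prob_space H" using G H by (simp_all add: distr_nonneg_def)
  interpret P: prob_space "G \<Otimes>\<^sub>M H" using prob by (rule prob_space_pair)
  have neg: "measure G {..<0} = 0" "measure H {..<0} = 0"
    using G H by (simp_all add: distr_nonneg_def measure_def)
  have Times: "{..<0} \<times> UNIV \<in> sets (G \<Otimes>\<^sub>M H)" "UNIV \<times> {..<0} \<in> sets (G \<Otimes>\<^sub>M H)"
    using sets by auto
  have "measure (G \<Otimes>\<^sub>M H) {p. fst p + snd p \<in> {..<0}}
          \<le> measure (G \<Otimes>\<^sub>M H) ({..<0} \<times> UNIV \<union> UNIV \<times> {..<0})"
    using Times by (intro P.finite_measure_mono) auto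
  also have "\<dots> \<le> measure (G \<Otimes>\<^sub>M H) ({..<0} \<times> UNIV) + measure (G \<Otimes>\<^sub>M H) (UNIV \<times> {..<0})"
    using Times by (rule measure_Un_le)
  also have "\<dots> = 0"
    using neg sets by (simp add: measure_pair_Times prob)
  finally have neg_conv: "measure (conv G H) {..<0} = 0"
    using measure_conv[OF sets, of "{..<0}"] measure_nonneg[of "G \<Otimes>\<^sub>M H" "{p. fst p + snd p < 0}"]
    by simp
  interpret C: prob_space "conv G H" using prob sets by (rule prob_space_conv)
  show ?thesis using neg_conv
    by (simp add: distr_nonneg_def C.prob_space_axioms C.emeasure_eq_measure) (simp add: conv_def)
qed

lemma conv_return_0:
  fixes G :: "'a::euclidean_space measure"
  assumes sets: "sets G = sets borel"
  shows "conv G (return borel 0) = G"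
proof (rule measure_eqI)
  show "sets (conv G (return borel 0)) = sets G" using sets by (simp add: conv_def)
next
  fix B assume "B \<in> sets (conv G (return borel 0))"
  then have B: "B \<in> sets borel" by (simp add: conv_def)
  interpret R: prob_space "return borel (0::'a)" by (rule prob_space_return) simp
  let ?P = "(\<lambda>(x, y). x + y) -` B \<inter> space (G \<Otimes>\<^sub>M return borel 0)"
  have add: "(\<lambda>(x, y). x + y) \<in> measurable (G \<Otimes>\<^sub>M return borel 0) borel"
    using sets by (intro measurable_add_pair) auto
  have P: "?P \<in> sets (G \<Otimes>\<^sub>M return borel 0)"
    using add B by (rule measurable_sets)
  have space: "space G = UNIV" using sets_eq_imp_space_eq[OF sets] by simp
  have "emeasure (conv G (return borel 0)) B = emeasure (G \<Otimes>\<^sub>M return borel 0) ?P"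
    unfolding conv_def using B by (simp add: emeasure_distr[OF add])
  also have "\<dots> = (\<integral>\<^sup>+x. emeasure (return borel 0) (Pair x -` ?P) \<partial>G)"
    by (rule R.emeasure_pair_measure_alt[OF P])
  also have "\<dots> = (\<integral>\<^sup>+x. indicator B x \<partial>G)"
  proof (rule nn_integral_cong)
    fix x
    have "Pair x -` ?P \<in> sets borel" using sets_Pair1[OF P, of x] by simp
    then show "emeasure (return borel 0) (Pair x -` ?P) = indicator B x"
      by (simp add: indicator_def space space_pair_measure)
  qed
  also have "\<dots> = emeasure G B" using B sets by simp
  finally show "emeasure (conv G (return borel 0)) B = emeasure G B" .
qed

section \<open>Bounds for the tail of a convolution\<close>

lemma tail_conv_lower_bound:
  assumes G: "distr_nonneg G" and H: "distr_nonneg H" and v: "0 \<le> v" "v \<le> x"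
    and E: "E \<in> sets (G \<Otimes>\<^sub>M H)" "E \<subseteq> {p. v < fst p \<and> fst p \<le> x \<and> x < fst p + snd p}"
  shows "tail G x + (1 - tail G v) * tail H x + measure (G \<Otimes>\<^sub>M H) E \<le> tail (conv G H) x"
proof -
  have sets: "sets G = sets borel" "sets H = sets borel"
    and prob: "prob_space G" "prob_space H" using G H by (simp_all add: distr_nonneg_def)
  interpret P: prob_space "G \<Otimes>\<^sub>M H" using prob by (rule prob_space_pair)
  let ?E1 = "{x<..} \<times> {0..}" and ?E2 = "{0..v} \<times> {x<..}"
  have E12: "?E1 \<in> sets (G \<Otimes>\<^sub>M H)" "?E2 \<in> sets (G \<Otimes>\<^sub>M H)" using sets by auto
  have "measure (G \<Otimes>\<^sub>M H) (?E1 \<union> ?E2 \<union> E) = measure (G \<Otimes>\<^sub>M H) (?E1 \<union> ?E2) + measure (G \<Otimes>\<^sub>M H) E"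
    using E12 E v by (intro P.finite_measure_Union) auto
  also have "measure (G \<Otimes>\<^sub>M H) (?E1 \<union> ?E2) = measure (G \<Otimes>\<^sub>M H) ?E1 + measure (G \<Otimes>\<^sub>M H) ?E2"
    using E12 v by (intro P.finite_measure_Union) auto
  also have "measure (G \<Otimes>\<^sub>M H) ?E1 = tail G x"
    using measure_atLeast_0[OF H] by (simp add: measure_pair_Times prob sets tail_def)
  also have "measure (G \<Otimes>\<^sub>M H) ?E2 = (1 - tail G v) * tail H x"
    using measure_atLeastAtMost_0[OF G v(1)] by (simp add: measure_pair_Times prob sets tail_def)
  finally have "measure (G \<Otimes>\<^sub>M H) (?E1 \<union> ?E2 \<union> E)
      = tail G x + (1 - tail G v) * tail H x + measure (G \<Otimes>\<^sub>M H) E" .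
  moreover have "measure (G \<Otimes>\<^sub>M H) (?E1 \<union> ?E2 \<union> E) \<le> measure (G \<Otimes>\<^sub>M H) {p. x < fst p + snd p}"
    using E v by (intro P.finite_measure_mono sets_pair_borel_Collect sets) auto
  ultimately show ?thesis by (simp add: tail_conv sets)
qed

lemma tail_conv_le_split:
  assumes G: "real_distribution G" and H: "real_distribution H"
  shows "tail (conv G H) x \<le> tail G (x - v) + tail H (x - v)
           + measure (G \<Otimes>\<^sub>M H) {p. x < fst p + snd p \<and> fst p \<in> {v<..x - v} \<and> snd p \<in> {v<..x - v}}"
    (is "_ \<le> _ + _ + measure _ ?S")
proof -
  interpret G: real_distribution G by fact
  interpret H: real_distribution H by fact
  interpret P: prob_space "G \<Otimes>\<^sub>M H" by (rule prob_space_pair) unfold_locales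
  have Times: "{x - v<..} \<times> UNIV \<in> sets (G \<Otimes>\<^sub>M H)" "UNIV \<times> {x - v<..} \<in> sets (G \<Otimes>\<^sub>M H)" by auto
  have S: "?S \<in> sets (G \<Otimes>\<^sub>M H)" by (intro sets_pair_borel_Collect) auto
  \<comment> \<open>if neither summand exceeds \<open>x - v\<close> but their sum exceeds \<open>x\<close>, both exceed \<open>v\<close>\<close>
  have "tail (conv G H) x \<le> measure (G \<Otimes>\<^sub>M H) ({x - v<..} \<times> UNIV \<union> UNIV \<times> {x - v<..} \<union> ?S)"
    unfolding tail_conv[OF G.events_eq_borel H.events_eq_borel]
    using Times S by (intro P.finite_measure_mono) auto
  also have "\<dots> \<le> measure (G \<Otimes>\<^sub>M H) ({x - v<..} \<times> UNIV \<union> UNIV \<times> {x - v<..})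
                  + measure (G \<Otimes>\<^sub>M H) ?S"
    using Times S by (intro measure_Un_le) auto
  also have "\<dots> \<le> measure (G \<Otimes>\<^sub>M H) ({x - v<..} \<times> UNIV) + measure (G \<Otimes>\<^sub>M H) (UNIV \<times> {x - v<..})
                  + measure (G \<Otimes>\<^sub>M H) ?S"
    using measure_Un_le[OF Times] by simp
  also have "\<dots> = tail G (x - v) + tail H (x - v) + measure (G \<Otimes>\<^sub>M H) ?S"
    using G.prob_space H.prob_space
    by (simp add: measure_pair_Times G.prob_space_axioms H.prob_space_axioms tail_def)
  finally show ?thesis .
qed

lemma measure_pair_le_by_fst_sections:
  assumes "prob_space M" "prob_space M'" "prob_space N"
    and S: "S \<in> sets (M \<Otimes>\<^sub>M N)" and S': "S' \<in> sets (M' \<Otimes>\<^sub>M N)" and "0 \<le> K"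
    and le: "\<And>y. measure M {x. (x, y) \<in> S} \<le> K * measure M' {x. (x, y) \<in> S'}"
  shows "measure (M \<Otimes>\<^sub>M N) S \<le> K * measure (M' \<Otimes>\<^sub>M N) S'"
proof -
  interpret M: prob_space M by fact
  interpret M': prob_space M' by fact
  interpret N: prob_space N by fact
  interpret MN: pair_sigma_finite M N by unfold_locales
  interpret M'N: pair_sigma_finite M' N by unfold_locales
  have "emeasure (M \<Otimes>\<^sub>M N) S = (\<integral>\<^sup>+y. emeasure M ((\<lambda>x. (x, y)) -` S) \<partial>N)"
    by (rule MN.emeasure_pair_measure_alt2[OF S])
  also have "\<dots> \<le> (\<integral>\<^sup>+y. ennreal K * emeasure M' ((\<lambda>x. (x, y)) -` S') \<partial>N)"
  proof (rule nn_integral_mono)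
    fix y
    show "emeasure M ((\<lambda>x. (x, y)) -` S) \<le> ennreal K * emeasure M' ((\<lambda>x. (x, y)) -` S')"
      using ennreal_leI[OF le[of y]] \<open>0 \<le> K\<close>
      by (simp add: M.emeasure_eq_measure M'.emeasure_eq_measure vimage_def ennreal_mult)
  qed
  also have "\<dots> = ennreal K * emeasure (M' \<Otimes>\<^sub>M N) S'"
    by (simp add: nn_integral_cmult M'N.measurable_emeasure_Pair2[OF S']
        M'N.emeasure_pair_measure_alt2[OF S'])
  finally show ?thesis
    using \<open>0 \<le> K\<close> prob_space_pair[OF assms(1,3)] prob_space_pair[OF assms(2,3)]
    by (simp add: finite_measure.emeasure_eq_measure prob_space.finite_measure
        ennreal_mult[symmetric] ennreal_le_iff)
qed

lemma measure_pair_le_by_snd_sections: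
  assumes "prob_space M" "prob_space N" "prob_space N'"
    and S: "S \<in> sets (M \<Otimes>\<^sub>M N)" and S': "S' \<in> sets (M \<Otimes>\<^sub>M N')" and "0 \<le> K"
    and le: "\<And>x. measure N {y. (x, y) \<in> S} \<le> K * measure N' {y. (x, y) \<in> S'}"
  shows "measure (M \<Otimes>\<^sub>M N) S \<le> K * measure (M \<Otimes>\<^sub>M N') S'"
proof -
  interpret M: prob_space M by fact
  interpret N: prob_space N by fact
  interpret N': prob_space N' by fact
  interpret MN: pair_sigma_finite M N by unfold_locales
  interpret MN': pair_sigma_finite M N' by unfold_locales
  have "emeasure (M \<Otimes>\<^sub>M N) S = (\<integral>\<^sup>+x. emeasure N (Pair x -` S) \<partial>M)"
    by (rule N.emeasure_pair_measure_alt[OF S])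
  also have "\<dots> \<le> (\<integral>\<^sup>+x. ennreal K * emeasure N' (Pair x -` S') \<partial>M)"
  proof (rule nn_integral_mono)
    fix x
    show "emeasure N (Pair x -` S) \<le> ennreal K * emeasure N' (Pair x -` S')"
      using ennreal_leI[OF le[of x]] \<open>0 \<le> K\<close>
      by (simp add: N.emeasure_eq_measure N'.emeasure_eq_measure vimage_def ennreal_mult)
  qed
  also have "\<dots> = ennreal K * emeasure (M \<Otimes>\<^sub>M N') S'"
    by (simp add: nn_integral_cmult MN'.measurable_emeasure_Pair1[OF S']
        N'.emeasure_pair_measure_alt[OF S'])
  finally show ?thesis
    using \<open>0 \<le> K\<close> prob_space_pair[OF assms(1,2)] prob_space_pair[OF assms(1,3)]
    by (simp add: finite_measure.emeasure_eq_measure prob_space.finite_measure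
        ennreal_mult[symmetric] ennreal_le_iff)
qed

lemma measure_middle_le:
  assumes F: "real_distribution F" and G: "real_distribution G" and H: "real_distribution H"
    and K: "0 \<le> K1" "0 \<le> K2"
    and GF: "\<And>t. v \<le> t \<Longrightarrow> tail G t \<le> K1 * tail F t"
    and HF: "\<And>t. v \<le> t \<Longrightarrow> tail H t \<le> K2 * tail F t"
  shows "measure (G \<Otimes>\<^sub>M H) {p. x < fst p + snd p \<and> fst p \<in> {v<..x - v} \<and> snd p \<in> {v<..x - v}}
         \<le> K1 * (K2 * measure (F \<Otimes>\<^sub>M F) {p. x < fst p + snd p \<and> fst p \<in> {v<..x - v}}
                 + tail F (x - v) * tail H v)"
    (is "measure _ ?S \<le> K1 * (K2 * measure _ ?M + _)")
proof -
  interpret F: real_distribution F by fact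
  interpret G: real_distribution G by fact
  interpret H: real_distribution H by fact
  interpret FH: prob_space "F \<Otimes>\<^sub>M H" by (rule prob_space_pair) unfold_locales
  define S' where "S' = {p. x < fst p + snd p \<and> snd p \<in> {v<..x - v}}"
  have sets: "?S \<in> sets (G \<Otimes>\<^sub>M H)" "?S \<in> sets (F \<Otimes>\<^sub>M H)" "S' \<in> sets (F \<Otimes>\<^sub>M H)"
    "?M \<in> sets (F \<Otimes>\<^sub>M F)" "{x - v<..} \<times> {v<..} \<in> sets (F \<Otimes>\<^sub>M H)"
    unfolding S'_def by (auto intro!: sets_pair_borel_Collect)
  have "measure (G \<Otimes>\<^sub>M H) ?S \<le> K1 * measure (F \<Otimes>\<^sub>M H) S'"
  proof (rule measure_pair_le_by_fst_sections[OF G.prob_space_axioms F.prob_space_axioms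
        H.prob_space_axioms sets(1) sets(3) K(1)])
    fix y
    show "measure G {t. (t, y) \<in> ?S} \<le> K1 * measure F {t. (t, y) \<in> S'}"
    proof (cases "y \<in> {v<..x - v}")
      case True
      then have "measure G {t. (t, y) \<in> ?S} \<le> tail G (x - y)"
        unfolding tail_def by (intro G.finite_measure_mono) auto
      also have "\<dots> \<le> K1 * tail F (x - y)" using True GF by simp
      also have "{t. (t, y) \<in> S'} = {x - y<..}" using True by (auto simp: S'_def)
      ultimately show ?thesis by (simp add: tail_def)
    next
      case False
      then have empty: "{t. (t, y) \<in> ?S} = {}" by auto
      show ?thesis unfolding empty using K by simp
    qed
  qed
  also have "measure (F \<Otimes>\<^sub>M H) S' \<le> measure (F \<Otimes>\<^sub>M H) ?S + tail F (x - v) * tail H v"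
  proof -
    \<comment> \<open>outside the middle square, the first coordinate of a point of \<open>S'\<close> exceeds \<open>x - v\<close>\<close>
    have "measure (F \<Otimes>\<^sub>M H) S' \<le> measure (F \<Otimes>\<^sub>M H) (?S \<union> {x - v<..} \<times> {v<..})"
      using sets by (intro FH.finite_measure_mono) (auto simp: S'_def)
    also have "\<dots> \<le> measure (F \<Otimes>\<^sub>M H) ?S + measure (F \<Otimes>\<^sub>M H) ({x - v<..} \<times> {v<..})"
      using sets by (intro measure_Un_le) auto
    finally show ?thesis
      by (simp add: measure_pair_Times F.prob_space_axioms H.prob_space_axioms tail_def)
  qed
  also have "measure (F \<Otimes>\<^sub>M H) ?S \<le> K2 * measure (F \<Otimes>\<^sub>M F) ?M"
  proof (rule measure_pair_le_by_snd_sections[OF F.prob_space_axioms H.prob_space_axioms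
        F.prob_space_axioms sets(2) sets(4) K(2)])
    fix s
    show "measure H {t. (s, t) \<in> ?S} \<le> K2 * measure F {t. (s, t) \<in> ?M}"
    proof (cases "s \<in> {v<..x - v}")
      case True
      then have "measure H {t. (s, t) \<in> ?S} \<le> tail H (x - s)"
        unfolding tail_def by (intro H.finite_measure_mono) auto
      also have "\<dots> \<le> K2 * tail F (x - s)" using True HF by simp
      also have "{t. (s, t) \<in> ?M} = {x - s<..}" using True by auto
      ultimately show ?thesis by (simp add: tail_def)
    next
      case False
      then have empty: "{t. (s, t) \<in> ?S} = {}" by auto
      show ?thesis unfolding empty using K by simp
    qed
  qed
  finally show ?thesis using K(1) by (simp add: mult_left_mono)
qed

lemma tail_conv_upper_bound:
  assumes F: "distr_nonneg F" and G: "distr_nonneg G" and H: "distr_nonneg H"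
    and v: "0 \<le> v" "v \<le> x" and K: "0 \<le> K1" "0 \<le> K2"
    and GF: "\<And>t. v \<le> t \<Longrightarrow> tail G t \<le> K1 * tail F t"
    and HF: "\<And>t. v \<le> t \<Longrightarrow> tail H t \<le> K2 * tail F t"
  shows "tail (conv G H) x \<le> tail G (x - v) + tail H (x - v)
           + K1 * (K2 * (tail (conv F F) x - (2 - tail F v) * tail F x) + tail F (x - v) * tail H v)"
proof -
  let ?M = "{p. x < fst p + snd p \<and> fst p \<in> {v<..x - v}}"
  have "?M \<in> sets (F \<Otimes>\<^sub>M F)"
    using F by (intro sets_pair_borel_Collect) (auto simp: distr_nonneg_def)
  then have "tail F x + (1 - tail F v) * tail F x + measure (F \<Otimes>\<^sub>M F) ?M \<le> tail (conv F F) x"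
    using v by (intro tail_conv_lower_bound[OF F F v]) auto
  then have "measure (F \<Otimes>\<^sub>M F) ?M \<le> tail (conv F F) x - (2 - tail F v) * tail F x"
    by (simp add: algebra_simps)
  then have "K1 * (K2 * measure (F \<Otimes>\<^sub>M F) ?M + tail F (x - v) * tail H v)
      \<le> K1 * (K2 * (tail (conv F F) x - (2 - tail F v) * tail F x) + tail F (x - v) * tail H v)"
    using K by (simp add: mult_left_mono)
  moreover have "measure (G \<Otimes>\<^sub>M H) {p. x < fst p + snd p \<and> fst p \<in> {v<..x - v} \<and> snd p \<in> {v<..x - v}}
      \<le> K1 * (K2 * measure (F \<Otimes>\<^sub>M F) ?M + tail F (x - v) * tail H v)"
    using F G H by (intro measure_middle_le K GF HF distr_nonneg_real_distribution)
  ultimately show ?thesis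
    using tail_conv_le_split[of G H x v] G H by (simp add: distr_nonneg_real_distribution)
qed

section \<open>Closure properties of subexponential distributions\<close>

lemma tendsto_at_top_shift:
  fixes f :: "real \<Rightarrow> 'a::topological_space"
  assumes "(f \<longlongrightarrow> c) at_top"
  shows "((\<lambda>x. f (x - v)) \<longlongrightarrow> c) at_top"
proof -
  have "filterlim (\<lambda>x::real. x - v) at_top at_top"
    using filterlim_tendsto_add_at_top[OF tendsto_const[of "- v"] filterlim_ident] by simp
  then show ?thesis using filterlim_compose[OF assms] by blast
qed

lemma asymp_equivD'_const:
  fixes f g :: "'a \<Rightarrow> real"
  assumes "f \<sim>[F] (\<lambda>x. c * g x)" "eventually (\<lambda>x. g x \<noteq> 0) F" "c \<noteq> 0"
  shows "((\<lambda>x. f x / g x) \<longlongrightarrow> c) F"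
proof -
  have "((\<lambda>x. f x / (c * g x)) \<longlongrightarrow> 1) F"
    using assms by (intro asymp_equivD_strong) (auto elim: eventually_mono)
  then have "((\<lambda>x. c * (f x / (c * g x))) \<longlongrightarrow> c * 1) F" by (rule tendsto_mult_left)
  moreover have "c * (f x / (c * g x)) = f x / g x" for x
    using \<open>c \<noteq> 0\<close> by simp
  ultimately show ?thesis by simp
qed

lemma tendsto_ratio_1_sandwich:
  fixes f g h :: "'a \<Rightarrow> real"
  assumes "\<And>x. 0 < f x" "\<And>x. f x \<le> g x" "\<And>x. g x \<le> h x" "((\<lambda>x. h x / f x) \<longlongrightarrow> 1) F"
  shows "((\<lambda>x. g x / f x) \<longlongrightarrow> 1) F"
proof (rule tendsto_sandwich[OF always_eventually always_eventually tendsto_const assms(4)])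
  show "\<forall>x. 1 \<le> g x / f x" using assms(1,2) by simp
  show "\<forall>x. g x / f x \<le> h x / f x" using assms(1,3) by (simp add: divide_right_mono less_imp_le)
qed

text \<open>Subexponentiality for \<open>n = 2\<close>, which is all the closure arguments below use.\<close>

locale subexponential2 =
  fixes F :: "real measure"
  assumes distr_nonneg: "distr_nonneg F"
    and tail_pos: "0 < tail F x"
    and tail_conv_self_ratio: "((\<lambda>x. tail (conv F F) x / tail F x) \<longlongrightarrow> 2) at_top"
begin

sublocale real_distribution F
  using distr_nonneg by (rule distr_nonneg_real_distribution)

lemma tail_nonzero [simp]: "tail F x \<noteq> 0"
  using tail_pos[of x] by simp

lemma long_tailed:
  assumes "0 \<le> v"
  shows "((\<lambda>x. tail F (x - v) / tail F x) \<longlongrightarrow> 1) at_top"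
proof (rule tendsto_sandwich[of "\<lambda>_. 1" _ _
      "\<lambda>x. (tail (conv F F) x / tail F x - 2 + tail F v) / (tail F v - tail F x)"])
  show "eventually (\<lambda>x. 1 \<le> tail F (x - v) / tail F x) at_top"
    using assms tail_pos by (intro always_eventually allI) (simp add: le_divide_eq tail_antimono)
  show "eventually (\<lambda>x. tail F (x - v) / tail F x
          \<le> (tail (conv F F) x / tail F x - 2 + tail F v) / (tail F v - tail F x)) at_top"
    using order_tendstoD(2)[OF tail_tendsto_0 tail_pos[of v]] eventually_ge_at_top[of v]
  proof eventually_elim
    case (elim x)
    have "measure (F \<Otimes>\<^sub>M F) ({v<..x} \<times> {x - v<..}) = (tail F v - tail F x) * tail F (x - v)"
      using elim(2) by (simp add: measure_pair_Times prob_space_axioms measure_Ioc_eq_tail_diff tail_def)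
    moreover have "tail F x + (1 - tail F v) * tail F x + measure (F \<Otimes>\<^sub>M F) ({v<..x} \<times> {x - v<..})
        \<le> tail (conv F F) x"
      using elim(2) by (intro tail_conv_lower_bound[OF distr_nonneg distr_nonneg assms]) auto
    ultimately have "(tail F v - tail F x) * tail F (x - v) \<le> tail (conv F F) x - (2 - tail F v) * tail F x"
      by (simp add: algebra_simps)
    then have "tail F (x - v) / tail F x * (tail F v - tail F x)
        \<le> (tail (conv F F) x - (2 - tail F v) * tail F x) / tail F x"
      using tail_pos[of x] by (simp add: divide_right_mono mult.commute)
    also have "\<dots> = tail (conv F F) x / tail F x - 2 + tail F v"
      by (simp add: field_simps)
    finally show ?case using elim(1) by (simp add: pos_le_divide_eq)
  qed
  show "((\<lambda>_. 1) \<longlongrightarrow> 1) at_top" by simp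
  have "((\<lambda>x. (tail (conv F F) x / tail F x - 2 + tail F v) / (tail F v - tail F x))
          \<longlongrightarrow> (2 - 2 + tail F v) / (tail F v - 0)) at_top"
    using tail_pos[of v] by (intro tendsto_intros tail_conv_self_ratio tail_tendsto_0) auto
  then show "((\<lambda>x. (tail (conv F F) x / tail F x - 2 + tail F v) / (tail F v - tail F x)) \<longlongrightarrow> 1) at_top"
    using tail_pos[of v] by simp
qed

lemma tail_conv_ratio_eventually_greater:
  assumes G: "distr_nonneg G" and H: "distr_nonneg H"
    and GF: "((\<lambda>x. tail G x / tail F x) \<longlongrightarrow> c1) at_top"
    and HF: "((\<lambda>x. tail H x / tail F x) \<longlongrightarrow> c2) at_top"
    and "a < c1 + c2"
  shows "eventually (\<lambda>x. a < tail (conv G H) x / tail F x) at_top"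
proof -
  interpret G: real_distribution G using G by (rule distr_nonneg_real_distribution)
  have "((\<lambda>x. tail G x / tail F x + tail H x / tail F x - tail G x * (tail H x / tail F x))
          \<longlongrightarrow> c1 + c2 - 0 * c2) at_top"
    by (intro tendsto_intros GF HF G.tail_tendsto_0)
  then have "eventually (\<lambda>x. a < tail G x / tail F x + tail H x / tail F x - tail G x * (tail H x / tail F x)) at_top"
    using \<open>a < c1 + c2\<close> by (intro order_tendstoD(1)) auto
  then show ?thesis
    using eventually_ge_at_top[of 0]
  proof eventually_elim
    case (elim x)
    have "tail G x + (1 - tail G x) * tail H x \<le> tail (conv G H) x"
      using tail_conv_lower_bound[OF G H elim(2) order_refl, of "{}"] by simp
    then have "(tail G x + (1 - tail G x) * tail H x) / tail F x \<le> tail (conv G H) x / tail F x"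
      using tail_pos[of x] by (intro divide_right_mono) auto
    also have "(tail G x + (1 - tail G x) * tail H x) / tail F x
        = tail G x / tail F x + tail H x / tail F x - tail G x * (tail H x / tail F x)"
      by (simp add: field_simps)
    finally show ?case using elim(1) by linarith
  qed
qed

lemma tail_conv_ratio_le:
  assumes G: "distr_nonneg G" and H: "distr_nonneg H" and v: "0 \<le> v" "v \<le> x"
    and K: "0 \<le> K1" "0 \<le> K2"
    and GF: "\<And>t. v \<le> t \<Longrightarrow> tail G t \<le> K1 * tail F t"
    and HF: "\<And>t. v \<le> t \<Longrightarrow> tail H t \<le> K2 * tail F t"
  shows "tail (conv G H) x / tail F x
    \<le> (tail G (x - v) / tail F (x - v) + tail H (x - v) / tail F (x - v)) * (tail F (x - v) / tail F x)
      + K1 * (K2 * (tail (conv F F) x / tail F x - 2 + tail F v) + tail F (x - v) / tail F x * tail H v)"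
    (is "_ \<le> ?U")
proof -
  have "tail (conv G H) x \<le> tail G (x - v) + tail H (x - v)
      + K1 * (K2 * (tail (conv F F) x - (2 - tail F v) * tail F x) + tail F (x - v) * tail H v)"
    by (rule tail_conv_upper_bound[OF distr_nonneg G H v K GF HF])
  also have "\<dots> = ?U * tail F x"
    by (simp add: field_simps)
  finally show ?thesis
    using tail_pos[of x] by (simp add: divide_le_eq)
qed

lemma tail_conv_ratio_eventually_less:
  assumes G: "distr_nonneg G" and H: "distr_nonneg H"
    and GF: "((\<lambda>x. tail G x / tail F x) \<longlongrightarrow> c1) at_top"
    and HF: "((\<lambda>x. tail H x / tail F x) \<longlongrightarrow> c2) at_top"
    and "c1 + c2 < a"
  shows "eventually (\<lambda>x. tail (conv G H) x / tail F x < a) at_top"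
proof -
  interpret H: real_distribution H using H by (rule distr_nonneg_real_distribution)
  define K1 where "K1 = \<bar>c1\<bar> + 1"
  define K2 where "K2 = \<bar>c2\<bar> + 1"
  have K: "0 \<le> K1" "0 \<le> K2" by (simp_all add: K1_def K2_def)
  have "((\<lambda>v. K1 * (K2 * tail F v + tail H v)) \<longlongrightarrow> K1 * (K2 * 0 + 0)) at_top"
    by (intro tendsto_intros tail_tendsto_0 H.tail_tendsto_0)
  then have "eventually (\<lambda>t. tail G t / tail F t < K1 \<and> tail H t / tail F t < K2
      \<and> K1 * (K2 * tail F t + tail H t) < a - (c1 + c2)) at_top"
    using \<open>c1 + c2 < a\<close>
    by (intro eventually_conj order_tendstoD(2)[OF GF] order_tendstoD(2)[OF HF] order_tendstoD(2))
      (auto simp: K1_def K2_def)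
  then obtain N where N: "\<And>t. N \<le> t \<Longrightarrow> tail G t / tail F t < K1 \<and> tail H t / tail F t < K2
      \<and> K1 * (K2 * tail F t + tail H t) < a - (c1 + c2)"
    by (auto simp: eventually_at_top_linorder)
  define v where "v = max 0 N"
  have v: "0 \<le> v" "K1 * (K2 * tail F v + tail H v) < a - (c1 + c2)"
    using N[of v] by (auto simp: v_def)
  have GF_le: "tail G t \<le> K1 * tail F t" and HF_le: "tail H t \<le> K2 * tail F t" if "v \<le> t" for t
    using N[of t] that tail_pos[of t] by (auto simp: v_def divide_less_eq less_imp_le)
  define U where "U x = (tail G (x - v) / tail F (x - v) + tail H (x - v) / tail F (x - v))
      * (tail F (x - v) / tail F x)
      + K1 * (K2 * (tail (conv F F) x / tail F x - 2 + tail F v) + tail F (x - v) / tail F x * tail H v)"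
    for x
  have "(U \<longlongrightarrow> (c1 + c2) * 1 + K1 * (K2 * (2 - 2 + tail F v) + 1 * tail H v)) at_top"
    unfolding U_def
    by (intro tendsto_intros tendsto_at_top_shift GF HF long_tailed tail_conv_self_ratio v(1))
  moreover have "(c1 + c2) * 1 + K1 * (K2 * (2 - 2 + tail F v) + 1 * tail H v) < a"
    using v(2) by (simp add: algebra_simps)
  ultimately have "eventually (\<lambda>x. U x < a) at_top" by (rule order_tendstoD(2))
  then show ?thesis
    using eventually_ge_at_top[of v]
  proof eventually_elim
    case (elim x)
    then show ?case
      using tail_conv_ratio_le[OF G H v(1) elim(2) K GF_le HF_le] by (simp add: U_def)
  qed
qed

lemma tail_conv_ratio_tendsto:
  assumes "distr_nonneg G" "distr_nonneg H"
    and "((\<lambda>x. tail G x / tail F x) \<longlongrightarrow> c1) at_top"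
    and "((\<lambda>x. tail H x / tail F x) \<longlongrightarrow> c2) at_top"
  shows "((\<lambda>x. tail (conv G H) x / tail F x) \<longlongrightarrow> c1 + c2) at_top"
  using tail_conv_ratio_eventually_greater[OF assms] tail_conv_ratio_eventually_less[OF assms]
  by (rule order_tendstoI)

lemma subexponential_if_tail_ratio_tendsto_1:
  assumes W: "distr_nonneg W" and pos: "\<And>x. 0 < tail W x"
    and WF: "((\<lambda>x. tail W x / tail F x) \<longlongrightarrow> 1) at_top"
  shows "subexponential W"
proof -
  have pow: "distr_nonneg (conv_pow W (Suc m))
      \<and> ((\<lambda>x. tail (conv_pow W (Suc m)) x / tail F x) \<longlongrightarrow> real (Suc m)) at_top" for m
  proof (induction m)
    case 0
    have "conv_pow W 1 = W" using W by (simp add: conv_return_0 distr_nonneg_def)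
    then show ?case using W WF by simp
  next
    case (Suc m)
    then have "((\<lambda>x. tail (conv W (conv_pow W (Suc m))) x / tail F x) \<longlongrightarrow> 1 + real (Suc m)) at_top"
      by (intro tail_conv_ratio_tendsto W WF) auto
    then show ?case using Suc distr_nonneg_conv[OF W] by simp
  qed
  have "(\<lambda>x. tail (conv_pow W n) x) \<sim>[at_top] (\<lambda>x. real n * tail W x)" if n: "2 \<le> n" for n
  proof -
    obtain m where m: "n = Suc m" using n by (cases n) auto
    have "((\<lambda>x. (tail (conv_pow W n) x / tail F x) / (tail W x / tail F x)) \<longlongrightarrow> real n / 1) at_top"
      using pow[of m] WF m by (intro tendsto_divide) auto
    moreover have "(tail (conv_pow W n) x / tail F x) / (tail W x / tail F x) = tail (conv_pow W n) x / tail W x" for x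
      by simp
    ultimately have "((\<lambda>x. tail (conv_pow W n) x / tail W x) \<longlongrightarrow> real n) at_top" by simp
    then show ?thesis using n by (intro asymp_equivI'_const) auto
  qed
  then show ?thesis using W pos by (simp add: subexponential_def distr_nonneg_def)
qed

end

lemma subexponential2_if_subexponential:
  assumes "subexponential F"
  shows "subexponential2 F"
proof
  show F: "distr_nonneg F" and pos: "0 < tail F x" for x
    using assms by (simp_all add: subexponential_def distr_nonneg_def)
  have "(\<lambda>x. tail (conv_pow F 2) x) \<sim>[at_top] (\<lambda>x. real 2 * tail F x)"
    using assms unfolding subexponential_def by blast
  moreover have "conv_pow F 2 = conv F F"
    using F by (simp add: numeral_2_eq_2 conv_return_0 distr_nonneg_def)
  ultimately show "((\<lambda>x. tail (conv F F) x / tail F x) \<longlongrightarrow> 2) at_top"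
    using pos by (intro asymp_equivD'_const) (auto intro!: always_eventually simp: less_imp_neq[symmetric])
qed

section \<open>The radial functional\<close>

lemma mem_scaleR_image_iff:
  fixes A :: "'a::real_vector set"
  assumes "0 < u"
  shows "z \<in> (\<lambda>a. u *\<^sub>R a) ` A \<longleftrightarrow> (1 / u) *\<^sub>R z \<in> A"
proof
  assume "z \<in> (\<lambda>a. u *\<^sub>R a) ` A"
  then obtain a where "a \<in> A" "z = u *\<^sub>R a" by blast
  then show "(1 / u) *\<^sub>R z \<in> A" using assms by simp
next
  assume "(1 / u) *\<^sub>R z \<in> A"
  moreover have "z = u *\<^sub>R ((1 / u) *\<^sub>R z)" using assms by simp
  ultimately show "z \<in> (\<lambda>a. u *\<^sub>R a) ` A" by blast
qed

definition radial_scales :: "'a::real_vector set \<Rightarrow> 'a \<Rightarrow> real set" where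
  "radial_scales A z = {u. 0 < u \<and> z \<in> (\<lambda>a. u *\<^sub>R a) ` A}"

lemma radial_sup_eq: "radial_sup A z = (if radial_scales A z = {} then 0 else Sup (radial_scales A z))"
  by (simp only: radial_sup_def radial_scales_def)

lemma mem_radial_scales_iff: "u \<in> radial_scales A z \<longleftrightarrow> 0 < u \<and> (1 / u) *\<^sub>R z \<in> A"
  using mem_scaleR_image_iff by (auto simp: radial_scales_def)

context
  fixes A :: "(real ^ 'd) set"
  assumes A: "class_R A"
begin

lemma scaleR_mem_if_ge_1:
  assumes "a \<in> A" "1 \<le> t"
  shows "t *\<^sub>R a \<in> A"
proof (rule ccontr)
  assume "t *\<^sub>R a \<notin> A"
  moreover have "0 \<notin> A" using A closure_subset by (auto simp: class_R_def)
  ultimately have "(1 / t) *\<^sub>R (t *\<^sub>R a) + (1 - 1 / t) *\<^sub>R 0 \<in> - A"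
    using A assms(2) by (intro convexD) (auto simp: class_R_def)
  then show False using assms by simp
qed

lemma radial_scales_down_closed:
  assumes "u \<in> radial_scales A z" "0 < u'" "u' \<le> u"
  shows "u' \<in> radial_scales A z"
proof -
  have u: "0 < u" "(1 / u) *\<^sub>R z \<in> A" using assms(1) by (auto simp: mem_radial_scales_iff)
  have "1 \<le> u / u'" using assms by simp
  with u(2) have "(u / u') *\<^sub>R ((1 / u) *\<^sub>R z) \<in> A" by (rule scaleR_mem_if_ge_1)
  then show ?thesis using assms u by (simp add: mem_radial_scales_iff)
qed

lemma bdd_above_radial_scales: "bdd_above (radial_scales A z)"
proof -
  have "0 \<notin> closure A" using A by (simp add: class_R_def)
  then obtain e where e: "0 < e" "ball 0 e \<subseteq> - closure A"
    using open_contains_ball[of "- closure A"] by blast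
  have "u \<le> norm z / e" if "u \<in> radial_scales A z" for u
  proof -
    have u: "0 < u" "(1 / u) *\<^sub>R z \<in> A" using that by (auto simp: mem_radial_scales_iff)
    then have "(1 / u) *\<^sub>R z \<notin> ball 0 e" using e closure_subset by blast
    then have "e \<le> norm z / u" using u by simp
    then show ?thesis using u e by (simp add: field_simps)
  qed
  then show ?thesis by (auto simp: bdd_above_def)
qed

lemma radial_scales_no_max:
  assumes "u \<in> radial_scales A z"
  shows "\<exists>u'>u. u' \<in> radial_scales A z"
proof -
  have u: "0 < u" "(1 / u) *\<^sub>R z \<in> A" using assms by (auto simp: mem_radial_scales_iff)
  have "open A" using A by (simp add: class_R_def)
  then obtain e where e: "0 < e" "ball ((1 / u) *\<^sub>R z) e \<subseteq> A"
    using u(2) by (auto simp: open_contains_ball)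
  have "isCont (\<lambda>w. (1 / w) *\<^sub>R z) u" using u by (intro continuous_intros) auto
  then obtain d where d: "0 < d" "\<And>w. dist w u < d \<Longrightarrow> dist ((1 / w) *\<^sub>R z) ((1 / u) *\<^sub>R z) < e"
    unfolding continuous_at_eps_delta using e by blast
  have "dist ((1 / (u + d / 2)) *\<^sub>R z) ((1 / u) *\<^sub>R z) < e"
    using d by (intro d(2)) (simp add: dist_real_def)
  then have "(1 / (u + d / 2)) *\<^sub>R z \<in> A" using e by (auto simp: dist_commute)
  then show ?thesis using u d by (intro exI[of _ "u + d / 2"]) (auto simp: mem_radial_scales_iff)
qed

lemma less_radial_sup_iff:
  assumes "0 < x"
  shows "x < radial_sup A z \<longleftrightarrow> z \<in> (\<lambda>a. x *\<^sub>R a) ` A"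
proof
  assume less: "x < radial_sup A z"
  then have ne: "radial_scales A z \<noteq> {}" using assms by (auto simp: radial_sup_eq split: if_splits)
  then obtain u where "u \<in> radial_scales A z" "x < u"
    using less less_cSup_iff[OF ne bdd_above_radial_scales] by (auto simp: radial_sup_eq)
  then have "x \<in> radial_scales A z" using radial_scales_down_closed assms by auto
  then show "z \<in> (\<lambda>a. x *\<^sub>R a) ` A" by (simp add: radial_scales_def)
next
  assume "z \<in> (\<lambda>a. x *\<^sub>R a) ` A"
  then have "x \<in> radial_scales A z" using assms by (simp add: radial_scales_def)
  then obtain u where u: "x < u" "u \<in> radial_scales A z" using radial_scales_no_max by blast
  then have "u \<le> Sup (radial_scales A z)" using bdd_above_radial_scales by (intro cSup_upper)
  then show "x < radial_sup A z" using u by (auto simp: radial_sup_eq)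
qed

lemma radial_sup_nonneg: "0 \<le> radial_sup A z"
proof (cases "radial_scales A z = {}")
  case False
  then obtain u where u: "u \<in> radial_scales A z" by blast
  then have "u \<le> Sup (radial_scales A z)" using bdd_above_radial_scales by (intro cSup_upper)
  moreover have "0 < u" using u by (simp add: mem_radial_scales_iff)
  ultimately show ?thesis using False by (simp add: radial_sup_eq)
qed (simp add: radial_sup_eq)

lemma borel_measurable_radial_sup: "radial_sup A \<in> borel_measurable borel"
  unfolding borel_measurable_iff_greater
proof
  fix a :: real
  show "{w \<in> space borel. a < radial_sup A w} \<in> sets borel"
  proof (cases "a < 0")
    case True
    then have "{w \<in> space borel. a < radial_sup A w} = UNIV"
      using radial_sup_nonneg by (auto intro: less_le_trans)
    then show ?thesis by simp
  next
    case False
    \<comment> \<open>for \<open>a \<ge> 0\<close> the superlevel set is a union of open dilates of \<open>A\<close>\<close>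
    have "{w \<in> space borel. a < radial_sup A w} = (\<Union>u\<in>{a<..}. (\<lambda>x. u *\<^sub>R x) ` A)"
    proof (intro equalityI subsetI)
      fix w assume "w \<in> {w \<in> space borel. a < radial_sup A w}"
      then obtain u where "a < u" "u < radial_sup A w" using dense by auto
      then show "w \<in> (\<Union>u\<in>{a<..}. (\<lambda>x. u *\<^sub>R x) ` A)"
        using False less_radial_sup_iff[of u w] by auto
    next
      fix w assume "w \<in> (\<Union>u\<in>{a<..}. (\<lambda>x. u *\<^sub>R x) ` A)"
      then obtain u where "a < u" "w \<in> (\<lambda>x. u *\<^sub>R x) ` A" by auto
      then show "w \<in> {w \<in> space borel. a < radial_sup A w}"
        using False less_radial_sup_iff[of u w] by auto
    qed
    moreover have "open (\<Union>u\<in>{a<..}. (\<lambda>x. u *\<^sub>R x) ` A)"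
      using A False by (intro open_UN ballI open_scaling) (auto simp: class_R_def)
    ultimately show ?thesis by simp
  qed
qed

lemma radial_sup_add_le: "radial_sup A (z1 + z2) \<le> radial_sup A z1 + radial_sup A z2"
proof (rule field_le_epsilon)
  fix e :: real assume e: "0 < e"
  define a where "a = radial_sup A z1 + e / 2"
  define b where "b = radial_sup A z2 + e / 2"
  have ab: "0 < a" "0 < b" using e radial_sup_nonneg[of z1] radial_sup_nonneg[of z2] by (auto simp: a_def b_def)
  have "(1 / a) *\<^sub>R z1 \<in> - A" "(1 / b) *\<^sub>R z2 \<in> - A"
    using less_radial_sup_iff[OF ab(1), of z1] less_radial_sup_iff[OF ab(2), of z2] e
      mem_scaleR_image_iff[OF ab(1), of z1 A] mem_scaleR_image_iff[OF ab(2), of z2 A]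
    by (auto simp: a_def b_def)
  then have "(a / (a + b)) *\<^sub>R ((1 / a) *\<^sub>R z1) + (b / (a + b)) *\<^sub>R ((1 / b) *\<^sub>R z2) \<in> - A"
    using A ab by (intro convexD) (simp_all add: class_R_def add_divide_distrib[symmetric])
  moreover have "(a / (a + b)) *\<^sub>R ((1 / a) *\<^sub>R z1) + (b / (a + b)) *\<^sub>R ((1 / b) *\<^sub>R z2)
      = (1 / (a + b)) *\<^sub>R (z1 + z2)"
    using ab by (simp add: scaleR_add_right)
  ultimately have "\<not> a + b < radial_sup A (z1 + z2)"
    using less_radial_sup_iff[of "a + b"] mem_scaleR_image_iff[of "a + b" "z1 + z2" A] ab by simp
  then show "radial_sup A (z1 + z2) \<le> radial_sup A z1 + radial_sup A z2 + e" by (simp add: a_def b_def)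
qed

lemma radial_sup_le_add_orthant:
  assumes "z2 \<in> orthant"
  shows "radial_sup A z1 \<le> radial_sup A (z1 + z2)"
proof (rule ccontr)
  assume "\<not> ?thesis"
  then obtain x where x: "radial_sup A (z1 + z2) < x" "x < radial_sup A z1"
    using dense[of "radial_sup A (z1 + z2)" "radial_sup A z1"] by auto
  then have "0 < x" using radial_sup_nonneg[of "z1 + z2"] by linarith
  then have "(1 / x) *\<^sub>R z1 \<in> A"
    using x(2) less_radial_sup_iff[of x z1] mem_scaleR_image_iff[of x z1 A] by simp
  moreover have "(1 / x) *\<^sub>R z2 \<in> orthant" using assms \<open>0 < x\<close> by (simp add: orthant_def)
  ultimately have "(1 / x) *\<^sub>R (z1 + z2) \<in> A"
    using A by (simp add: class_R_def increasing_set_def scaleR_add_right)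
  then have "x < radial_sup A (z1 + z2)"
    using \<open>0 < x\<close> less_radial_sup_iff[of x] mem_scaleR_image_iff[of x "z1 + z2" A] by simp
  then show False using x(1) by linarith
qed

end

section \<open>Laws of the radial functional\<close>

lemma tail_V_A:
  assumes "class_R A" "sets V = sets borel"
  shows "tail (V_A A V) x = measure V {z. x < radial_sup A z}"
proof -
  have "radial_sup A \<in> borel_measurable V"
    unfolding measurable_cong_sets[OF assms(2) refl] by (rule borel_measurable_radial_sup[OF assms(1)])
  then show ?thesis
    unfolding tail_def V_A_def using sets_eq_imp_space_eq[OF assms(2)]
    by (subst measure_distr) (auto intro!: arg_cong[where f="measure V"])
qed

lemma tail_V_A_eq_measure_scaled:
  assumes "class_R A" "sets V = sets borel" "0 < x"
  shows "tail (V_A A V) x = measure V ((\<lambda>a. x *\<^sub>R a) ` A)"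
  using tail_V_A[OF assms(1,2)] less_radial_sup_iff[OF assms(1,3)] by simp

lemma distr_nonneg_V_A:
  assumes "class_R A" "prob_space V" "sets V = sets borel"
  shows "distr_nonneg (V_A A V)"
proof -
  have R: "radial_sup A \<in> borel_measurable V"
    unfolding measurable_cong_sets[OF assms(3) refl] by (rule borel_measurable_radial_sup[OF assms(1)])
  have "radial_sup A -` {..<0} \<inter> space V = {}"
    using radial_sup_nonneg[OF assms(1)] by (auto dest: leD)
  then show ?thesis
    unfolding distr_nonneg_def V_A_def
    by (simp add: emeasure_distr[OF R] prob_space.prob_space_distr[OF assms(2) R])
qed

lemma orthant_in_borel: "orthant \<in> sets borel"
  using closed_positive_orthant by (simp add: orthant_def)

lemma measure_orthant:
  assumes "distr_orthant V"
  shows "measure V orthant = 1"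
proof -
  interpret prob_space V using assms by (simp add: distr_orthant_def)
  have sets: "sets V = sets borel" and "measure V (- orthant) = 0"
    using assms by (simp_all add: distr_orthant_def measure_def)
  then show ?thesis
    using orthant_in_borel prob_compl[of orthant] sets_eq_imp_space_eq[OF sets] by (simp add: Compl_eq_Diff_UNIV)
qed

lemma tail_V_A_le_tail_V_A_conv:
  assumes A: "class_R A" and V1: "prob_space V1" "sets V1 = sets borel" and V2: "distr_orthant V2"
  shows "tail (V_A A V1) x \<le> tail (V_A A (conv V1 V2)) x"
proof -
  have V2': "prob_space V2" "sets V2 = sets borel" using V2 by (simp_all add: distr_orthant_def)
  interpret P: prob_space "V1 \<Otimes>\<^sub>M V2" using V1(1) V2'(1) by (rule prob_space_pair)
  have [measurable]: "radial_sup A \<in> borel_measurable borel" by (rule borel_measurable_radial_sup[OF A])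
  have R: "{z. x < radial_sup A z} \<in> sets borel" by measurable
  have "tail (V_A A V1) x = measure V1 {z. x < radial_sup A z} * measure V2 orthant"
    using tail_V_A[OF A V1(2)] measure_orthant[OF V2] by simp
  also have "\<dots> = measure (V1 \<Otimes>\<^sub>M V2) ({z. x < radial_sup A z} \<times> orthant)"
    by (rule measure_pair_Times[symmetric, OF V1(1) V2'(1)]) (simp_all add: R orthant_in_borel V1(2) V2'(2))
  also have "\<dots> \<le> measure (V1 \<Otimes>\<^sub>M V2) {p. fst p + snd p \<in> {z. x < radial_sup A z}}"
  proof (rule P.finite_measure_mono)
    show "{z. x < radial_sup A z} \<times> orthant \<subseteq> {p. fst p + snd p \<in> {z. x < radial_sup A z}}"
      using radial_sup_le_add_orthant[OF A] by (force intro: less_le_trans)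
    show "{p. fst p + snd p \<in> {z. x < radial_sup A z}} \<in> sets (V1 \<Otimes>\<^sub>M V2)"
      by (rule sets_pair_borel_Collect[OF V1(2) V2'(2)]) measurable
  qed
  also have "\<dots> = measure (conv V1 V2) {z. x < radial_sup A z}"
    by (rule measure_conv[OF V1(2) V2'(2) R, symmetric])
  also have "\<dots> = tail (V_A A (conv V1 V2)) x"
    by (rule tail_V_A[OF A, symmetric]) (simp add: conv_def)
  finally show ?thesis .
qed

lemma tail_V_A_conv_le_tail_conv_V_A:
  assumes A: "class_R A" and V1: "prob_space V1" "sets V1 = sets borel"
    and V2: "prob_space V2" "sets V2 = sets borel"
  shows "tail (V_A A (conv V1 V2)) x \<le> tail (conv (V_A A V1) (V_A A V2)) x"
proof -
  interpret P: prob_space "V1 \<Otimes>\<^sub>M V2" using V1(1) V2(1) by (rule prob_space_pair)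
  have [measurable]: "radial_sup A \<in> borel_measurable borel" by (rule borel_measurable_radial_sup[OF A])
  note [measurable_cong] = V1(2) V2(2)
  let ?R = "\<lambda>(a, b). (radial_sup A a, radial_sup A b)"
  have R: "?R \<in> measurable (V1 \<Otimes>\<^sub>M V2) (borel \<Otimes>\<^sub>M borel)" by measurable
  have sum: "{p. x < fst p + snd p} \<in> sets (borel \<Otimes>\<^sub>M borel :: (real \<times> real) measure)"
    by (rule sets_pair_borel_Collect[OF refl refl]) measurable
  have Rsum: "?R -` {p. x < fst p + snd p} \<inter> space (V1 \<Otimes>\<^sub>M V2) \<in> sets (V1 \<Otimes>\<^sub>M V2)"
    using R sum by (rule measurable_sets)
  have "{z. x < radial_sup A z} \<in> sets borel" by measurable
  then have "tail (V_A A (conv V1 V2)) x = measure (V1 \<Otimes>\<^sub>M V2) {p. fst p + snd p \<in> {z. x < radial_sup A z}}"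
    using tail_V_A[OF A, of "conv V1 V2"] measure_conv[OF V1(2) V2(2)] by (simp add: conv_def)
  also have "\<dots> \<le> measure (V1 \<Otimes>\<^sub>M V2) (?R -` {p. x < fst p + snd p} \<inter> space (V1 \<Otimes>\<^sub>M V2))"
  proof (rule P.finite_measure_mono[OF _ Rsum])
    have "space (V1 \<Otimes>\<^sub>M V2) = UNIV"
      using sets_eq_imp_space_eq[OF V1(2)] sets_eq_imp_space_eq[OF V2(2)] by (simp add: space_pair_measure)
    then show "{p. fst p + snd p \<in> {z. x < radial_sup A z}} \<subseteq> ?R -` {p. x < fst p + snd p} \<inter> space (V1 \<Otimes>\<^sub>M V2)"
      using radial_sup_add_le[OF A] by (force intro: less_le_trans)
  qed
  also have "\<dots> = measure (distr (V1 \<Otimes>\<^sub>M V2) (borel \<Otimes>\<^sub>M borel) ?R) {p. x < fst p + snd p}"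
    by (rule measure_distr[OF R sum, symmetric])
  also have "distr (V1 \<Otimes>\<^sub>M V2) (borel \<Otimes>\<^sub>M borel) ?R = V_A A V1 \<Otimes>\<^sub>M V_A A V2"
  proof -
    have "prob_space (V_A A V2)" using distr_nonneg_V_A[OF A V2] by (simp add: distr_nonneg_def)
    then have "sigma_finite_measure (distr V2 borel (radial_sup A))"
      by (simp add: V_A_def prob_space_imp_sigma_finite)
    moreover have "radial_sup A \<in> borel_measurable V1" "radial_sup A \<in> borel_measurable V2" by measurable
    ultimately show ?thesis unfolding V_A_def by (simp add: pair_measure_distr)
  qed
  also have "measure \<dots> {p. x < fst p + snd p} = tail (conv (V_A A V1) (V_A A V2)) x"
    by (simp add: tail_conv V_A_def)
  finally show ?thesis .
qed

theorem lemma3p4: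
  fixes A :: "(real ^ 'd) set" and V1 V2 :: "(real ^ 'd) measure"
  assumes "class_R A"
    and "distr_orthant V1" and "distr_orthant V2"
    and "S_A A V1"
    and "(\<lambda>x. measure V2 ((\<lambda>a. x *\<^sub>R a) ` A)) \<in> o[at_top](\<lambda>x. measure V1 ((\<lambda>a. x *\<^sub>R a) ` A))"
  shows "(\<lambda>x. measure (conv V1 V2) ((\<lambda>a. x *\<^sub>R a) ` A)) \<sim>[at_top] (\<lambda>x. measure V1 ((\<lambda>a. x *\<^sub>R a) ` A))
         \<and> S_A A (conv V1 V2)"
proof -
  have V1: "prob_space V1" "sets V1 = sets borel" and V2: "prob_space V2" "sets V2 = sets borel"
    using assms(2,3) by (simp_all add: distr_orthant_def)
  have V12: "prob_space (conv V1 V2)" "sets (conv V1 V2) = sets borel"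
    using prob_space_conv[OF V1(1) V2(1) V1(2) V2(2)] by (simp_all add: conv_def)
  interpret F: subexponential2 "V_A A V1"
    using assms(4) by (simp add: S_A_def subexponential2_if_subexponential)
  have scaled: "\<forall>\<^sub>F x in at_top. tail (V_A A V) x = measure V ((\<lambda>a. x *\<^sub>R a) ` A)"
    if "sets V = sets borel" for V
    using eventually_gt_at_top[of 0] by eventually_elim (rule tail_V_A_eq_measure_scaled[OF assms(1) that])
  have small: "((\<lambda>x. tail (V_A A V2) x / tail (V_A A V1) x) \<longlongrightarrow> 0) at_top"
    using smalloD_tendsto[OF assms(5)]
    by (rule Lim_transform_eventually) (use scaled[OF V1(2)] scaled[OF V2(2)] in eventually_elim, simp)
  have "((\<lambda>x. tail (V_A A V1) x / tail (V_A A V1) x) \<longlongrightarrow> 1) at_top" by simp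
  from F.tail_conv_ratio_tendsto[OF F.distr_nonneg distr_nonneg_V_A[OF assms(1) V2] this small]
  have "((\<lambda>x. tail (conv (V_A A V1) (V_A A V2)) x / tail (V_A A V1) x) \<longlongrightarrow> 1) at_top" by simp
  then have ratio: "((\<lambda>x. tail (V_A A (conv V1 V2)) x / tail (V_A A V1) x) \<longlongrightarrow> 1) at_top"
    by (rule tendsto_ratio_1_sandwich[OF F.tail_pos tail_V_A_le_tail_V_A_conv[OF assms(1) V1 assms(3)]
        tail_V_A_conv_le_tail_conv_V_A[OF assms(1) V1 V2]])
  have "(\<lambda>x. measure (conv V1 V2) ((\<lambda>a. x *\<^sub>R a) ` A)) \<sim>[at_top] (\<lambda>x. measure V1 ((\<lambda>a. x *\<^sub>R a) ` A))"
    using asymp_equiv_cong[OF scaled[OF V12(2)] scaled[OF V1(2)]] asymp_equivI'[OF ratio] by simp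
  moreover have "S_A A (conv V1 V2)"
    unfolding S_A_def
  proof (rule F.subexponential_if_tail_ratio_tendsto_1[OF distr_nonneg_V_A[OF assms(1) V12] _ ratio])
    show "0 < tail (V_A A (conv V1 V2)) x" for x
      using F.tail_pos[of x] tail_V_A_le_tail_V_A_conv[OF assms(1) V1 assms(3), of x] by linarith
  qed
  ultimately show ?thesis ..
qed

end
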